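(* Define $$\Psi_e(t)=\begin{cases}\tfrac{e^2}{4}t^2,&0\leq t\leq2,\\ e^t,&t>2.\end{cases}$$ Then: (a) $\Psi_e$ is a Young's function, and there are constants $0<m<M<\infty$ with $m\Psi_e(t)\leq\cosh(t)-1\leq M\Psi_e(t)$ for all $t\geq0$. Hence $L^{\Psi_e}(0,\infty)=L^{\cosh-1}(0,\infty)$ with equivalent norms. (b) With the Luxemburg norm, the fundamental function of $L^{\Psi_e}(0,\infty)$ is $$\varphi_e(t)=\begin{cases}\tfrac{e}{2}t^{1/2},&t\geq e^{-2},\\ \dfrac{1}{-\log t},&0<t<e^{-2}.\end{cases}$$ (c) $M_{\Psi_e}(s)=\sup_{t>0}\varphi_e(st)/\varphi_e(t)$ equals $1$ for $0<s\leq1$ and $s^{1/2}$ for $s>1$. (d) Consequently the upper fundamental index of $L^{\Psi_e}(0,\infty)$, and hence of $L^{\cosh-1}(0,\infty)$, equals $\tfrac12$, and the lower fundamental index equals $0$.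
   Context: Young's function: a convex $\Psi:[0,\infty)\to[0,\infty]$ with $\Psi(0)=\lim_{u\to0+}\Psi(u)=0$, $\Psi(u)\to\infty$ as $u\to\infty$, and $\Psi$ non-constant on $(0,\infty)$. The Orlicz space $L^\Psi(0,\infty)$ consists of measurable $f$ with $\int_0^\infty\Psi(\lambda|f|)<\infty$ for some $\lambda>0$. The Luxemburg norm is $\|f\|=\inf\{k>0:\int\Psi(|f|/k)\leq1\}$. The fundamental function is $\varphi(t)=\|\chi_E\|$ for $E$ of Lebesgue measure $t$. With $M_\Psi(s)=\sup_{t>0}\varphi(st)/\varphi(t)$, the fundamental indices are $$\underline{\beta}=\sup_{0<s<1}\frac{\log M_\Psi(s)}{\log s},\qquad \overline{\beta}=\inf_{s>1}\frac{\log M_\Psi(s)}{\log s}.$$ *)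

theory Defs
  imports "HOL-Analysis.Analysis"
begin

definition young_function :: "(real \<Rightarrow> ereal) \<Rightarrow> bool" where
  "young_function \<Psi> \<longleftrightarrow>
     (\<forall>x\<ge>0. \<Psi> x \<ge> 0) \<and>
     (\<forall>x y u. 0 \<le> x \<longrightarrow> 0 \<le> y \<longrightarrow> 0 < u \<longrightarrow> u < 1 \<longrightarrow>
        \<Psi> (u * x + (1 - u) * y) \<le> ereal u * \<Psi> x + ereal (1 - u) * \<Psi> y) \<and>
     \<Psi> 0 = 0 \<and>
     (\<Psi> \<longlongrightarrow> 0) (at_right 0) \<and>
     (\<Psi> \<longlongrightarrow> \<infinity>) at_top \<and>
     (\<exists>x>0. \<exists>y>0. \<Psi> x \<noteq> \<Psi> y)"

definition orlicz_modular :: "(real \<Rightarrow> ereal) \<Rightarrow> (real \<Rightarrow> real) \<Rightarrow> ennreal" where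
  "orlicz_modular \<Psi> f = (\<integral>\<^sup>+ x. e2ennreal (\<Psi> \<bar>f x\<bar>) \<partial>(lebesgue_on {0<..}))"

definition orlicz_space :: "(real \<Rightarrow> ereal) \<Rightarrow> (real \<Rightarrow> real) set" where
  "orlicz_space \<Psi> = {f. f \<in> borel_measurable (lebesgue_on {0<..}) \<and>
      (\<exists>c>0. orlicz_modular \<Psi> (\<lambda>x. c * f x) < \<infinity>)}"

definition luxemburg_norm :: "(real \<Rightarrow> ereal) \<Rightarrow> (real \<Rightarrow> real) \<Rightarrow> real" where
  "luxemburg_norm \<Psi> f = Inf {k. 0 < k \<and> orlicz_modular \<Psi> (\<lambda>x. f x / k) \<le> 1}"

text \<open>Fundamental function, computed on the representative set (0,t].\<close>
definition fundamental_function :: "(real \<Rightarrow> ereal) \<Rightarrow> real \<Rightarrow> real" where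
  "fundamental_function \<Psi> t = luxemburg_norm \<Psi> (indicator {0<..t})"

definition M_fun :: "(real \<Rightarrow> ereal) \<Rightarrow> real \<Rightarrow> real" where
  "M_fun \<Psi> s = (SUP t\<in>{0<..}. fundamental_function \<Psi> (s * t) / fundamental_function \<Psi> t)"

definition lower_index :: "(real \<Rightarrow> ereal) \<Rightarrow> real" where
  "lower_index \<Psi> = (SUP s\<in>{0<..<1}. ln (M_fun \<Psi> s) / ln s)"

definition upper_index :: "(real \<Rightarrow> ereal) \<Rightarrow> real" where
  "upper_index \<Psi> = (INF s\<in>{1<..}. ln (M_fun \<Psi> s) / ln s)"

definition Psi_e :: "real \<Rightarrow> real" where
  "Psi_e t = (if t \<le> 2 then exp 1 ^ 2 / 4 * t ^ 2 else exp t)"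

definition phi_e :: "real \<Rightarrow> real" where
  "phi_e t = (if exp (-2) \<le> t then exp 1 / 2 * sqrt t else 1 / (- ln t))"

end

theory Submission
  imports Defs "HOL-Real_Asymp.Real_Asymp"
begin

text \<open>
  Both \<open>\<Psi>\<^sub>e\<close> and \<open>cosh - 1\<close> grow like a multiple of \<open>t\<^sup>2\<close> near \<open>0\<close> and like \<open>e\<^sup>t\<close> at infinity,
  so \<open>\<Psi>\<^sub>e / 8 \<le> cosh - 1 \<le> \<Psi>\<^sub>e\<close>; this gives the same Orlicz space with equivalent norms.
  For a function \<open>P\<close> strictly increasing on \<open>[0,\<infinity>)\<close> with \<open>P 0 = 0\<close>, the Luxemburg norm of the
  indicator of a set of measure \<open>t\<close> is \<open>1 / x\<close> where \<open>P x = 1 / t\<close>: for \<open>\<Psi>\<^sub>e\<close> this is \<open>\<phi>\<^sub>e\<close>,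
  for \<open>cosh - 1\<close> it is \<open>1 / arcosh (1 + 1 / t)\<close>. The ratio \<open>\<phi>(st) / \<phi>(t)\<close> is at most \<open>1\<close> for
  \<open>s \<le> 1\<close> by monotonicity, and at most \<open>\<surd>s\<close> for \<open>s > 1\<close> because \<open>P u / u\<^sup>2\<close> is nondecreasing.
  Both bounds are approached, as \<open>t \<rightarrow> 0\<close> (logarithmic regime) and as \<open>t \<rightarrow> \<infinity>\<close> (quadratic regime)
  respectively. Hence \<open>M(s) = max 1 (\<surd>s)\<close>, and the indices are \<open>0\<close> and \<open>1/2\<close>.
\<close>

section \<open>Orlicz modular and Luxemburg norm\<close>

lemma orlicz_modular_mono:
  fixes P Q g h :: "real \<Rightarrow> real"
  assumes "\<And>x. P \<bar>g x\<bar> \<le> Q \<bar>h x\<bar>"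
  shows "orlicz_modular (\<lambda>t. ereal (P t)) g \<le> orlicz_modular (\<lambda>t. ereal (Q t)) h"
  unfolding orlicz_modular_def using assms by (intro nn_integral_mono) (simp add: ennreal_leI)

lemma orlicz_modular_mult_le:
  fixes P g :: "real \<Rightarrow> real"
  assumes P: "P \<in> borel_measurable borel" and g: "g \<in> borel_measurable (lebesgue_on {0<..})"
    and nonneg: "\<And>y. 0 \<le> y \<Longrightarrow> 0 \<le> P y"
    and sub: "\<And>y. 0 \<le> y \<Longrightarrow> P (l * y) \<le> l * P y" and l: "0 \<le> l"
  shows "orlicz_modular (\<lambda>t. ereal (P t)) (\<lambda>x. l * g x) \<le> ennreal l * orlicz_modular (\<lambda>t. ereal (P t)) g"
proof -
  have "(\<lambda>x. ennreal (P \<bar>g x\<bar>)) \<in> borel_measurable (lebesgue_on {0<..})"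
    using measurable_compose[OF borel_measurable_abs[OF g] P] by measurable
  moreover have "ennreal (P \<bar>l * g x\<bar>) \<le> ennreal l * ennreal (P \<bar>g x\<bar>)" for x
    using sub[of "\<bar>g x\<bar>"] nonneg[of "\<bar>g x\<bar>"] l
    by (simp add: abs_mult ennreal_leI flip: ennreal_mult)
  ultimately show ?thesis
    unfolding orlicz_modular_def by (simp add: nn_integral_mono flip: nn_integral_cmult)
qed

lemma luxemburg_admissible_exists:
  fixes P :: "real \<Rightarrow> real"
  assumes P: "P \<in> borel_measurable borel" and nonneg: "\<And>y. 0 \<le> y \<Longrightarrow> 0 \<le> P y"
    and sub: "\<And>l y. 0 \<le> l \<Longrightarrow> l \<le> 1 \<Longrightarrow> 0 \<le> y \<Longrightarrow> P (l * y) \<le> l * P y"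
    and f: "f \<in> orlicz_space (\<lambda>t. ereal (P t))"
  shows "\<exists>k>0. orlicz_modular (\<lambda>t. ereal (P t)) (\<lambda>x. f x / k) \<le> 1"
proof -
  obtain c where meas: "f \<in> borel_measurable (lebesgue_on {0<..})" and c: "0 < c"
    and fin: "orlicz_modular (\<lambda>t. ereal (P t)) (\<lambda>x. c * f x) < \<infinity>"
    using f unfolding orlicz_space_def by auto
  define a where "a = enn2real (orlicz_modular (\<lambda>t. ereal (P t)) (\<lambda>x. c * f x))"
  have a: "0 \<le> a" "orlicz_modular (\<lambda>t. ereal (P t)) (\<lambda>x. c * f x) = ennreal a"
    using fin by (auto simp: a_def less_top)
  have "orlicz_modular (\<lambda>t. ereal (P t)) (\<lambda>x. f x / ((a + 1) / c))
      = orlicz_modular (\<lambda>t. ereal (P t)) (\<lambda>x. 1 / (a + 1) * (c * f x))"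
    using a c by (simp add: field_simps)
  also have "\<dots> \<le> ennreal (1 / (a + 1)) * orlicz_modular (\<lambda>t. ereal (P t)) (\<lambda>x. c * f x)"
    using a(1) by (intro orlicz_modular_mult_le[OF P _ nonneg] sub) (use meas in auto)
  also have "\<dots> \<le> 1"
    using a by (simp flip: ennreal_mult)
  finally show ?thesis
    using a c by (intro exI[of _ "(a + 1) / c"]) auto
qed

lemma orlicz_space_subset:
  fixes P Q :: "real \<Rightarrow> real"
  assumes b: "0 < b" and QP: "\<And>y. 0 \<le> y \<Longrightarrow> Q y \<le> P (b * y)"
  shows "orlicz_space (\<lambda>t. ereal (P t)) \<subseteq> orlicz_space (\<lambda>t. ereal (Q t))"
proof
  fix f assume "f \<in> orlicz_space (\<lambda>t. ereal (P t))"
  then obtain c where meas: "f \<in> borel_measurable (lebesgue_on {0<..})" and c: "0 < c"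
    and fin: "orlicz_modular (\<lambda>t. ereal (P t)) (\<lambda>x. c * f x) < \<infinity>"
    unfolding orlicz_space_def by auto
  have "orlicz_modular (\<lambda>t. ereal (Q t)) (\<lambda>x. c / b * f x) \<le> orlicz_modular (\<lambda>t. ereal (P t)) (\<lambda>x. c * f x)"
  proof (rule orlicz_modular_mono)
    fix x
    show "Q \<bar>c / b * f x\<bar> \<le> P \<bar>c * f x\<bar>"
      using QP[of "\<bar>c / b * f x\<bar>"] b by (simp add: abs_mult)
  qed
  then show "f \<in> orlicz_space (\<lambda>t. ereal (Q t))"
    using meas c b fin unfolding orlicz_space_def by (auto intro!: exI[of _ "c / b"])
qed

lemma luxemburg_admissible_rescale:
  fixes P Q :: "real \<Rightarrow> real"
  assumes b: "0 < b" and QP: "\<And>y. 0 \<le> y \<Longrightarrow> Q y \<le> P (b * y)"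
    and k: "0 < k" "orlicz_modular (\<lambda>t. ereal (P t)) (\<lambda>x. f x / k) \<le> 1"
  shows "orlicz_modular (\<lambda>t. ereal (Q t)) (\<lambda>x. f x / (b * k)) \<le> 1"
proof -
  have "orlicz_modular (\<lambda>t. ereal (Q t)) (\<lambda>x. f x / (b * k)) \<le> orlicz_modular (\<lambda>t. ereal (P t)) (\<lambda>x. f x / k)"
  proof (rule orlicz_modular_mono)
    fix x
    show "Q \<bar>f x / (b * k)\<bar> \<le> P \<bar>f x / k\<bar>"
      using QP[of "\<bar>f x / (b * k)\<bar>"] b k by (simp add: abs_mult)
  qed
  then show ?thesis using k by simp
qed

lemma luxemburg_norm_le_rescale:
  fixes P Q :: "real \<Rightarrow> real"
  assumes b: "0 < b" and QP: "\<And>y. 0 \<le> y \<Longrightarrow> Q y \<le> P (b * y)"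
    and admissible: "\<exists>k>0. orlicz_modular (\<lambda>t. ereal (P t)) (\<lambda>x. f x / k) \<le> 1"
  shows "luxemburg_norm (\<lambda>t. ereal (Q t)) f \<le> b * luxemburg_norm (\<lambda>t. ereal (P t)) f"
proof -
  define SP where "SP = {k. 0 < k \<and> orlicz_modular (\<lambda>t. ereal (P t)) (\<lambda>x. f x / k) \<le> 1}"
  define SQ where "SQ = {k. 0 < k \<and> orlicz_modular (\<lambda>t. ereal (Q t)) (\<lambda>x. f x / k) \<le> 1}"
  have rescale: "b * k \<in> SQ" if "k \<in> SP" for k
    using that b luxemburg_admissible_rescale[OF b, of Q P] QP by (auto simp: SP_def SQ_def)
  have "Inf SQ / b \<le> Inf SP"
  proof (rule cInf_greatest)
    show "SP \<noteq> {}" using admissible by (auto simp: SP_def)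
    fix k assume "k \<in> SP"
    then have "Inf SQ \<le> b * k"
      by (intro cInf_lower rescale) (auto simp: SQ_def intro!: bdd_belowI[of _ 0])
    then show "Inf SQ / b \<le> k" using b by (simp add: divide_le_eq mult.commute)
  qed
  then show ?thesis
    using b unfolding luxemburg_norm_def SP_def SQ_def by (simp add: divide_le_eq mult.commute)
qed

lemma orlicz_modular_indicator:
  fixes P :: "real \<Rightarrow> real"
  assumes "P 0 = 0" "0 < k" "E \<in> sets lebesgue" "E \<subseteq> {0<..}"
  shows "orlicz_modular (\<lambda>t. ereal (P t)) (\<lambda>x. indicator E x / k) = ennreal (P (1 / k)) * emeasure lebesgue E"
proof -
  have "(\<lambda>x. e2ennreal (ereal (P \<bar>indicator E x / k\<bar>))) = (\<lambda>x. ennreal (P (1 / k)) * indicator E x)"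
    using assms by (auto simp: fun_eq_iff indicator_def)
  moreover have "E \<in> sets (lebesgue_on {0<..})" "emeasure (lebesgue_on {0<..}) E = emeasure lebesgue E"
    using assms by (simp_all add: sets_restrict_space_iff emeasure_restrict_space)
  ultimately show ?thesis
    unfolding orlicz_modular_def by (simp add: nn_integral_cmult_indicator)
qed

lemma luxemburg_norm_indicator:
  fixes P :: "real \<Rightarrow> real"
  assumes P0: "P 0 = 0" and mono: "strict_mono_on {0..} P"
    and x: "0 < x" "P x * t = 1"
    and E: "E \<in> sets lebesgue" "E \<subseteq> {0<..}" "emeasure lebesgue E = ennreal t"
  shows "luxemburg_norm (\<lambda>t. ereal (P t)) (indicator E) = 1 / x"
proof -
  have "0 < P x"
    using strict_mono_onD[OF mono, of 0 x] P0 x by simp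
  then have t: "0 < t"
    using x(2) by (metis zero_less_mult_pos zero_less_one)
  have "orlicz_modular (\<lambda>t. ereal (P t)) (\<lambda>y. indicator E y / k) \<le> 1 \<longleftrightarrow> 1 / x \<le> k" if k: "0 < k" for k
  proof -
    have "0 \<le> P (1 / k)"
      using strict_mono_on_leD[OF mono, of 0 "1 / k"] P0 k by simp
    then have "orlicz_modular (\<lambda>t. ereal (P t)) (\<lambda>y. indicator E y / k) = ennreal (P (1 / k) * t)"
      using orlicz_modular_indicator[of P k E, OF P0 k E(1,2)] E(3) t by (simp add: ennreal_mult)
    also have "\<dots> \<le> 1 \<longleftrightarrow> P (1 / k) \<le> P x"
    proof -
      have "P x = 1 / t" using x(2) t by (simp add: field_simps)
      then show ?thesis using t by (simp add: le_divide_eq)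
    qed
    also have "\<dots> \<longleftrightarrow> 1 / k \<le> x"
      using k x by (intro strict_mono_on_less_eq[OF mono]) auto
    also have "\<dots> \<longleftrightarrow> 1 / x \<le> k"
      using k x by (simp add: field_simps)
    finally show ?thesis .
  qed
  then have "{k. 0 < k \<and> orlicz_modular (\<lambda>t. ereal (P t)) (\<lambda>y. indicator E y / k) \<le> 1} = {1 / x..}"
    using x by (auto simp: less_le_trans[of 0 "1 / x"])
  then show ?thesis unfolding luxemburg_norm_def by simp
qed

lemma fundamental_function_eq:
  fixes P :: "real \<Rightarrow> real"
  assumes "P 0 = 0" "strict_mono_on {0..} P" "0 < x" "P x * t = 1" "0 < t"
  shows "fundamental_function (\<lambda>t. ereal (P t)) t = 1 / x"
  unfolding fundamental_function_def
  using assms by (intro luxemburg_norm_indicator) (auto simp: emeasure_completion)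

section \<open>The dilation function of the fundamental function\<close>

lemma cSUP_eq_tendsto:
  fixes f :: "'a \<Rightarrow> real"
  assumes le: "\<And>x. x \<in> A \<Longrightarrow> f x \<le> b" and lim: "(f \<longlongrightarrow> b) F"
    and F: "F \<noteq> bot" and ev: "\<forall>\<^sub>F x in F. x \<in> A"
  shows "(SUP x\<in>A. f x) = b"
proof (rule antisym)
  show "(SUP x\<in>A. f x) \<le> b"
    using eventually_happens[OF ev] F le by (intro cSUP_least) auto
  have "\<forall>\<^sub>F x in F. f x \<le> (SUP x\<in>A. f x)"
    using ev by eventually_elim (intro cSUP_upper bdd_aboveI2[of _ _ b] le)
  then show "b \<le> (SUP x\<in>A. f x)"
    using F by (intro tendsto_upperbound[OF lim]) auto
qed

text \<open>Here \<open>X t\<close> is the inverse of \<open>P\<close> at \<open>1 / t\<close>, so that \<open>1 / X t\<close> is the fundamental function.\<close>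

lemma M_fun_eqI:
  fixes P X :: "real \<Rightarrow> real"
  assumes P0: "P 0 = 0" and mono: "strict_mono_on {0..} P"
    and X: "\<And>t. 0 < t \<Longrightarrow> 0 < X t \<and> P (X t) * t = 1" and s: "0 < s"
    and le: "\<And>t. 0 < t \<Longrightarrow> X t / X (s * t) \<le> b"
    and lim: "((\<lambda>t. X t / X (s * t)) \<longlongrightarrow> b) F" and F: "F \<noteq> bot" and ev: "\<forall>\<^sub>F t in F. 0 < t"
  shows "M_fun (\<lambda>t. ereal (P t)) s = b"
proof -
  have "fundamental_function (\<lambda>t. ereal (P t)) (s * t) / fundamental_function (\<lambda>t. ereal (P t)) t
      = X t / X (s * t)" if "0 < t" for t
  proof -
    have "fundamental_function (\<lambda>t. ereal (P t)) u = 1 / X u" if "0 < u" for u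
      using X[OF that] that by (intro fundamental_function_eq[OF P0 mono]) auto
    then show ?thesis using \<open>0 < t\<close> s by simp
  qed
  then have "M_fun (\<lambda>t. ereal (P t)) s = (SUP t\<in>{0<..}. X t / X (s * t))"
    unfolding M_fun_def by (intro SUP_cong) auto
  also have "\<dots> = b"
    using le lim F ev by (intro cSUP_eq_tendsto) auto
  finally show ?thesis .
qed

lemma M_fun_eq_1:
  fixes P X :: "real \<Rightarrow> real"
  assumes P0: "P 0 = 0" and mono: "strict_mono_on {0..} P"
    and X: "\<And>t. 0 < t \<Longrightarrow> 0 < X t \<and> P (X t) * t = 1" and s: "0 < s" "s \<le> 1"
    and lim: "((\<lambda>t. X t / X (s * t)) \<longlongrightarrow> 1) F" "F \<noteq> bot" "\<forall>\<^sub>F t in F. 0 < t"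
  shows "M_fun (\<lambda>t. ereal (P t)) s = 1"
proof (rule M_fun_eqI[OF P0 mono X s(1) _ lim])
  fix t :: real assume t: "0 < t"
  have "P (X t) = 1 / t" "P (X (s * t)) = 1 / (s * t)"
    using X[of t] X[of "s * t"] t s by (auto simp: field_simps)
  moreover have "1 / t \<le> 1 / (s * t)"
    using s t by (simp add: frac_le mult_le_cancel_right1)
  ultimately have "X t \<le> X (s * t)"
    using X[of t] X[of "s * t"] s t strict_mono_on_less_eq[OF mono, of "X t" "X (s * t)"] by simp
  then show "X t / X (s * t) \<le> 1"
    using X[of "s * t"] s t by simp
qed

lemma M_fun_eq_sqrt:
  fixes P X :: "real \<Rightarrow> real"
  assumes P0: "P 0 = 0" and mono: "strict_mono_on {0..} P"
    and quadratic: "\<And>v w. 0 < v \<Longrightarrow> v \<le> w \<Longrightarrow> P v / v\<^sup>2 \<le> P w / w\<^sup>2"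
    and X: "\<And>t. 0 < t \<Longrightarrow> 0 < X t \<and> P (X t) * t = 1" and s: "1 < s"
    and lim: "((\<lambda>t. X t / X (s * t)) \<longlongrightarrow> sqrt s) F" "F \<noteq> bot" "\<forall>\<^sub>F t in F. 0 < t"
  shows "M_fun (\<lambda>t. ereal (P t)) s = sqrt s"
proof (rule M_fun_eqI[OF P0 mono X _ _ lim])
  fix t :: real assume t: "0 < t"
  define v w where "v = X (s * t)" and "w = X t"
  have v: "0 < v" "P v * (s * t) = 1" and w: "0 < w" "P w * t = 1"
    using X[of t] X[of "s * t"] t s by (simp_all add: v_def w_def)
  have "P w * t = (s * P v) * t"
    using v(2) w(2) by (simp add: mult_ac)
  then have Pw: "P w = s * P v"
    using t by simp
  have "0 < s * t"
    using s t by simp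
  then have Pv: "0 < P v"
    using v(2) by (metis zero_less_mult_pos2 zero_less_one)
  then have "P v \<le> P w"
    using s by (simp add: Pw)
  then have "v \<le> w"
    using v w strict_mono_on_less_eq[OF mono, of v w] by simp
  then have "P v / v\<^sup>2 * (v\<^sup>2 * w\<^sup>2) \<le> P w / w\<^sup>2 * (v\<^sup>2 * w\<^sup>2)"
    using v(1) by (intro mult_right_mono quadratic) auto
  then have "P v * w\<^sup>2 \<le> P v * (s * v\<^sup>2)"
    using v w unfolding Pw by (simp add: mult_ac)
  then have "w\<^sup>2 \<le> (sqrt s * v)\<^sup>2"
    using Pv s by (simp add: power_mult_distrib)
  moreover have "0 \<le> sqrt s * v"
    using v s by simp
  ultimately have "w \<le> sqrt s * v"
    by (rule power2_le_imp_le)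
  then show "X t / X (s * t) \<le> sqrt s"
    using v(1) by (simp add: v_def w_def divide_le_eq)
qed (use s in auto)

lemma upper_index_eq:
  assumes "\<And>s. 1 < s \<Longrightarrow> M_fun P s = s powr a"
  shows "upper_index P = a"
proof -
  have "ln (M_fun P s) / ln s = a" if "1 < s" for s
    using assms[OF that] that by (simp add: ln_powr)
  then have "(\<lambda>s. ln (M_fun P s) / ln s) ` {1<..} = (\<lambda>s. a) ` {1::real<..}"
    by (intro image_cong) auto
  then show ?thesis
    unfolding upper_index_def by (simp add: cINF_const)
qed

lemma lower_index_eq:
  assumes "\<And>s. 0 < s \<Longrightarrow> s < 1 \<Longrightarrow> M_fun P s = s powr a"
  shows "lower_index P = a"
proof -
  have "ln (M_fun P s) / ln s = a" if "0 < s" "s < 1" for s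
    using assms[OF that] that by (simp add: ln_powr)
  then have "(\<lambda>s. ln (M_fun P s) / ln s) ` {0<..<1} = (\<lambda>s. a) ` {0<..<1::real}"
    by (intro image_cong) auto
  then show ?thesis
    unfolding lower_index_def by (simp add: cSUP_const)
qed

section \<open>The Young function \<open>\<Psi>\<^sub>e\<close>\<close>

lemma exp_two_eq: "exp (2 :: real) = exp 1 ^ 2"
  by (simp flip: exp_of_nat_mult)

lemma Psi_e_0 [simp]: "Psi_e 0 = 0"
  by (simp add: Psi_e_def)

definition Psi_e' :: "real \<Rightarrow> real" where
  "Psi_e' t = (if t \<le> 2 then exp 1 ^ 2 / 2 * t else exp t)"

lemma Psi_e_has_real_derivative: "(Psi_e has_real_derivative Psi_e' x) (at x)"
proof -
  have Psi_e: "Psi_e = (\<lambda>t. if t \<in> {..2} then exp 1 ^ 2 / 4 * t ^ 2 else exp t)"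
    by (auto simp: Psi_e_def fun_eq_iff)
  have "((\<lambda>t. if t \<in> {..2} then exp 1 ^ 2 / 4 * t ^ 2 else exp t) has_derivative
      (if x \<in> {..2} then (*) (exp 1 ^ 2 / 2 * x) else (*) (exp x))) (at x within ({..2} \<union> {2<..}))"
  proof (rule has_derivative_If_within_closures)
    show "((\<lambda>t. exp 1 ^ 2 / 4 * t ^ 2) has_derivative (*) (exp 1 ^ 2 / 2 * x))
      (at x within {..2} \<union> (closure {..2} \<inter> closure {2<..}))"
      by (rule has_derivative_at_withinI, rule has_field_derivative_imp_has_derivative)
         (auto intro!: derivative_eq_intros)
    show "(exp has_derivative (*) (exp x)) (at x within {2<..} \<union> (closure {..2} \<inter> closure {2<..}))"
      by (rule has_derivative_at_withinI, rule has_field_derivative_imp_has_derivative)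
         (auto intro!: derivative_eq_intros)
  qed (auto simp: exp_two_eq)
  moreover have "{..2} \<union> {2<..} = (UNIV :: real set)"
    by auto
  ultimately show ?thesis
    unfolding Psi_e Psi_e'_def has_field_derivative_def by (cases "x \<le> 2") auto
qed

lemma convex_on_Psi_e: "convex_on UNIV Psi_e"
proof (rule convex_on_realI[OF _ Psi_e_has_real_derivative])
  fix x y :: real assume "x \<le> y"
  then show "Psi_e' x \<le> Psi_e' y"
  proof (cases "x \<le> 2"; cases "y \<le> 2")
    assume "x \<le> 2" "\<not> y \<le> 2"
    have "exp 1 ^ 2 / 2 * x \<le> exp 1 ^ 2 / 2 * 2"
      using \<open>x \<le> 2\<close> by (intro mult_left_mono) auto
    also have "\<dots> \<le> exp y"
      using \<open>\<not> y \<le> 2\<close> by (simp flip: exp_two_eq)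
    finally show ?thesis
      using \<open>x \<le> 2\<close> \<open>\<not> y \<le> 2\<close> by (simp add: Psi_e'_def)
  qed (auto simp: Psi_e'_def)
qed simp

lemma Psi_e_mult_le:
  assumes "0 \<le> l" "l \<le> 1"
  shows "Psi_e (l * x) \<le> l * Psi_e x"
  using convex_onD[OF convex_on_Psi_e, of l 0 x] assms by simp

lemma isCont_Psi_e: "isCont Psi_e x"
  using Psi_e_has_real_derivative DERIV_isCont by blast

lemma Psi_e_measurable: "Psi_e \<in> borel_measurable borel"
  by (intro borel_measurable_continuous_onI continuous_at_imp_continuous_on) (simp add: isCont_Psi_e)

lemma strict_mono_on_Psi_e: "strict_mono_on {0..} Psi_e"
proof (rule strict_mono_onI)
  fix x y :: real assume "x \<in> {0..}" "x < y"
  then have x: "0 \<le> x" "x < y" by auto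
  show "Psi_e x < Psi_e y"
  proof (cases "x \<le> 2"; cases "y \<le> 2")
    assume "x \<le> 2" "\<not> y \<le> 2"
    have "exp 1 ^ 2 / 4 * x ^ 2 \<le> exp 1 ^ 2 / 4 * 2 ^ 2"
      using x \<open>x \<le> 2\<close> by (intro mult_left_mono power_mono) auto
    also have "\<dots> < exp y"
      using \<open>\<not> y \<le> 2\<close> by (simp flip: exp_two_eq)
    finally show ?thesis
      using \<open>x \<le> 2\<close> \<open>\<not> y \<le> 2\<close> by (simp add: Psi_e_def)
  qed (use x in \<open>auto simp: Psi_e_def power_strict_mono\<close>)
qed

lemma Psi_e_nonneg: "0 \<le> Psi_e x"
  by (simp add: Psi_e_def)

lemma young_function_Psi_e: "young_function (\<lambda>t. ereal (Psi_e t))"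
  unfolding young_function_def
proof (intro conjI allI impI)
  fix x y u :: real assume "0 \<le> x" "0 \<le> y" "0 < u" "u < 1"
  then show "ereal (Psi_e (u * x + (1 - u) * y)) \<le> ereal u * ereal (Psi_e x) + ereal (1 - u) * ereal (Psi_e y)"
    using convex_onD[OF convex_on_Psi_e, of "1 - u" x y] by simp
next
  have "(Psi_e \<longlongrightarrow> 0) (at_right 0)"
    using isCont_Psi_e[of 0] by (simp add: isCont_def filterlim_at_split)
  then show "((\<lambda>t. ereal (Psi_e t)) \<longlongrightarrow> 0) (at_right 0)"
    using lim_ereal[of Psi_e 0 "at_right 0"] by (simp add: zero_ereal_def)
next
  have "\<forall>\<^sub>F t in at_top. exp t = Psi_e t"
    unfolding eventually_at_top_linorder by (intro exI[of _ 3]) (auto simp: Psi_e_def)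
  then have "filterlim Psi_e at_top at_top"
    using exp_at_top filterlim_cong by blast
  then show "((\<lambda>t. ereal (Psi_e t)) \<longlongrightarrow> \<infinity>) at_top"
    by (simp add: tendsto_PInfty_eq_at_top)
next
  have "Psi_e 1 \<noteq> Psi_e 2"
    using strict_mono_onD[OF strict_mono_on_Psi_e, of 1 2] by simp
  then show "\<exists>x>0. \<exists>y>0. ereal (Psi_e x) \<noteq> ereal (Psi_e y)"
    by (metis ereal.inject zero_less_one zero_less_numeral)
qed (simp_all add: Psi_e_nonneg Psi_e_def)

lemma exp_div_square_mono:
  fixes v w :: real
  assumes "2 \<le> v" "v \<le> w"
  shows "exp v / v\<^sup>2 \<le> exp w / w\<^sup>2"
proof (rule DERIV_nonneg_imp_nondecreasing[OF assms(2)])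
  fix x assume "v \<le> x" "x \<le> w"
  with assms have x: "2 \<le> x" by simp
  have "((\<lambda>x. exp x / x\<^sup>2) has_real_derivative exp x * (x - 2) / x ^ 3) (at x)"
    using x by (auto intro!: derivative_eq_intros simp: field_simps power2_eq_square power3_eq_cube)
  moreover have "0 \<le> exp x * (x - 2) / x ^ 3"
    using x by simp
  ultimately show "\<exists>d. ((\<lambda>x. exp x / x\<^sup>2) has_real_derivative d) (at x) \<and> 0 \<le> d"
    by blast
qed

lemma Psi_e_div_square_mono:
  assumes "0 < v" "v \<le> w"
  shows "Psi_e v / v\<^sup>2 \<le> Psi_e w / w\<^sup>2"
proof (cases "w \<le> 2")
  case False
  have "Psi_e v / v\<^sup>2 \<le> exp (max 2 v) / (max 2 v)\<^sup>2"
    using assms by (cases "v \<le> 2") (auto simp: Psi_e_def exp_two_eq max_def)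
  also have "\<dots> \<le> exp w / w\<^sup>2"
    using assms False by (intro exp_div_square_mono) auto
  finally show ?thesis
    using False by (simp add: Psi_e_def)
qed (use assms in \<open>simp add: Psi_e_def\<close>)

section \<open>Comparison with \<open>cosh - 1\<close>\<close>

lemma sinh_le_mult_cosh:
  fixes x :: real
  assumes "0 \<le> x"
  shows "sinh x \<le> x * cosh x"
proof -
  have "(\<lambda>x. x * cosh x - sinh x) 0 \<le> (\<lambda>x. x * cosh x - sinh x) x"
    by (rule DERIV_nonneg_imp_nondecreasing[OF assms]) (auto intro!: derivative_eq_intros exI)
  then show ?thesis by simp
qed

lemma cosh_minus_one_le_mult_sinh:
  fixes x :: real
  assumes "0 \<le> x"
  shows "2 * (cosh x - 1) \<le> x * sinh x"
proof -
  have "(\<lambda>x. x * sinh x - 2 * cosh x) 0 \<le> (\<lambda>x. x * sinh x - 2 * cosh x) x"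
  proof (rule DERIV_nonneg_imp_nondecreasing[OF assms])
    fix y :: real assume "0 \<le> y"
    have "((\<lambda>x. x * sinh x - 2 * cosh x) has_real_derivative y * cosh y - sinh y) (at y)"
      by (auto intro!: derivative_eq_intros)
    moreover have "0 \<le> y * cosh y - sinh y"
      using sinh_le_mult_cosh[OF \<open>0 \<le> y\<close>] by simp
    ultimately show "\<exists>d. ((\<lambda>x. x * sinh x - 2 * cosh x) has_real_derivative d) (at y) \<and> 0 \<le> d"
      by blast
  qed
  then show ?thesis by simp
qed

lemma cosh_minus_one_div_square_mono:
  fixes v w :: real
  assumes "0 < v" "v \<le> w"
  shows "(cosh v - 1) / v\<^sup>2 \<le> (cosh w - 1) / w\<^sup>2"
proof (rule DERIV_nonneg_imp_nondecreasing[OF assms(2)])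
  fix y assume "v \<le> y"
  then have y: "0 < y" using assms by simp
  have "((\<lambda>x. (cosh x - 1) / x\<^sup>2) has_real_derivative
        (y * sinh y - 2 * (cosh y - 1)) / y ^ 3) (at y)"
    using y by (auto intro!: derivative_eq_intros simp: field_simps power2_eq_square power3_eq_cube)
  moreover have "0 \<le> (y * sinh y - 2 * (cosh y - 1)) / y ^ 3"
    using cosh_minus_one_le_mult_sinh[of y] y by simp
  ultimately show "\<exists>d. ((\<lambda>x. (cosh x - 1) / x\<^sup>2) has_real_derivative d) (at y) \<and> 0 \<le> d"
    by blast
qed

lemma square_div_two_le_cosh_minus_one:
  fixes v :: real
  assumes "0 < v"
  shows "v\<^sup>2 / 2 \<le> cosh v - 1"
proof -
  have "((\<lambda>x::real. (cosh x - 1) / x\<^sup>2) \<longlongrightarrow> 1 / 2) (at_right 0)"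
    by real_asymp
  moreover have "\<forall>\<^sub>F x in at_right 0. (cosh x - 1) / x\<^sup>2 \<le> (cosh v - 1) / v\<^sup>2"
    unfolding eventually_at_right_field
    using assms by (intro exI[of _ v]) (auto intro!: cosh_minus_one_div_square_mono)
  ultimately have "1 / 2 \<le> (cosh v - 1) / v\<^sup>2"
    by (intro tendsto_upperbound) auto
  then show ?thesis
    using assms by (simp add: field_simps)
qed

lemma strict_mono_on_cosh_minus_one: "strict_mono_on {0..} (\<lambda>t::real. cosh t - 1)"
  by (rule strict_mono_onI) (simp add: cosh_real_nonneg_less_iff)

lemma cosh_le_exp:
  fixes x :: real
  assumes "0 \<le> x"
  shows "cosh x \<le> exp x"
  using assms by (simp add: cosh_def)

lemma cosh_minus_one_le_Psi_e:
  assumes "0 \<le> t"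
  shows "cosh t - 1 \<le> Psi_e t"
proof (cases "t \<le> 2")
  case True
  show ?thesis
  proof (cases "t = 0")
    case False
    then have "(cosh t - 1) / t\<^sup>2 \<le> (cosh 2 - 1) / 2\<^sup>2"
      using assms True by (intro cosh_minus_one_div_square_mono) auto
    also have "\<dots> \<le> exp 1 ^ 2 / 4"
      using cosh_le_exp[of 2] by (simp add: exp_two_eq)
    finally show ?thesis
      using True False by (simp add: Psi_e_def field_simps)
  qed simp
next
  case False
  then show ?thesis
    using cosh_le_exp[of t] by (simp add: Psi_e_def)
qed

lemma Psi_e_le_cosh_minus_one:
  assumes "0 \<le> t"
  shows "Psi_e t \<le> 8 * (cosh t - 1)"
proof (cases "t \<le> 2")
  case True
  have "exp 1 ^ 2 \<le> (3::real) ^ 2"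
    using exp_le by (intro power_mono) auto
  then have "exp 1 ^ 2 / 4 * t\<^sup>2 \<le> 4 * t\<^sup>2"
    by (intro mult_right_mono) auto
  also have "\<dots> = 8 * (t\<^sup>2 / 2)"
    by simp
  also have "\<dots> \<le> 8 * (cosh t - 1)"
    using square_div_two_le_cosh_minus_one[of t] assms by (cases "t = 0") auto
  finally show ?thesis
    using True by (simp add: Psi_e_def)
next
  case False
  have "3 \<le> exp (2::real)"
    using exp_ge_add_one_self[of 2] by simp
  also have "\<dots> \<le> exp t"
    using False by simp
  finally have "3 \<le> exp t" .
  moreover have "exp t / 2 \<le> cosh t"
    by (simp add: cosh_def)
  ultimately show ?thesis
    using False by (simp add: Psi_e_def)
qed

lemma Psi_e_le_cosh_minus_one_scaled:
  assumes "0 \<le> t"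
  shows "Psi_e t \<le> cosh (8 * t) - 1"
  using Psi_e_mult_le[of "1 / 8" "8 * t"] Psi_e_le_cosh_minus_one[of "8 * t"] assms by simp

section \<open>Fundamental functions and fundamental indices\<close>

lemma Psi_e_inverse_phi_e:
  assumes t: "0 < t"
  shows "0 < 1 / phi_e t \<and> Psi_e (1 / phi_e t) * t = 1"
proof (cases "exp (-2) \<le> t")
  case True
  have "exp (-2) = exp (-1 :: real) ^ 2"
    by (simp add: power2_eq_square flip: exp_add)
  then have "exp (-1) = sqrt (exp (-2))"
    by simp
  also have "\<dots> \<le> sqrt t"
    using True by simp
  finally have "1 \<le> exp 1 * sqrt t"
    by (simp add: exp_minus field_simps)
  then have "2 / (exp 1 * sqrt t) \<le> 2"
    by (simp add: divide_le_eq)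
  then show ?thesis
    using True t by (simp add: phi_e_def Psi_e_def power_divide power_mult_distrib)
next
  case False
  have "t < exp (-2)"
    using False by simp
  also have "\<dots> \<le> 1"
    by simp
  finally have "t < 1" .
  from False have "ln t < ln (exp (-2))"
    using t by (subst ln_less_cancel_iff) auto
  then have "2 < - ln t"
    by simp
  then show ?thesis
    using False t \<open>t < 1\<close> by (simp add: phi_e_def Psi_e_def exp_minus)
qed

lemma fundamental_function_Psi_e:
  assumes "0 < t"
  shows "fundamental_function (\<lambda>t. ereal (Psi_e t)) t = phi_e t"
  using fundamental_function_eq[OF Psi_e_0 strict_mono_on_Psi_e, of "1 / phi_e t" t]
    Psi_e_inverse_phi_e[OF assms] assms by simp

lemma luxemburg_norm_Psi_e_indicator:
  assumes "0 < t" "E \<in> sets lebesgue" "E \<subseteq> {0<..}" "emeasure lebesgue E = ennreal t"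
  shows "luxemburg_norm (\<lambda>t. ereal (Psi_e t)) (indicator E) = phi_e t"
  using luxemburg_norm_indicator[OF Psi_e_0 strict_mono_on_Psi_e, of "1 / phi_e t" t E]
    Psi_e_inverse_phi_e[OF assms(1)] assms by simp

lemma M_fun_Psi_e:
  assumes s: "0 < s"
  shows "M_fun (\<lambda>t. ereal (Psi_e t)) s = (if s \<le> 1 then 1 else sqrt s)"
proof (cases "s \<le> 1")
  case True
  have "((\<lambda>t. ln t / ln (s * t)) \<longlongrightarrow> 1) (at_right 0)"
    using s by real_asymp
  moreover have "\<forall>\<^sub>F t in at_right 0. ln t / ln (s * t) = (1 / phi_e t) / (1 / phi_e (s * t))"
    unfolding eventually_at_right_field
  proof (intro exI[of _ "exp (-2)"] conjI allI impI)
    fix t :: real assume t: "0 < t" "t < exp (-2)"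
    moreover have "s * t \<le> t"
      using True t by (simp add: mult_le_cancel_right1)
    ultimately have "s * t < exp (-2)"
      by linarith
    then have "phi_e t = 1 / - ln t" "phi_e (s * t) = 1 / - ln (s * t)"
      using t by (simp_all add: phi_e_def)
    then show "ln t / ln (s * t) = (1 / phi_e t) / (1 / phi_e (s * t))"
      by simp
  qed simp
  ultimately have lim: "((\<lambda>t. (1 / phi_e t) / (1 / phi_e (s * t))) \<longlongrightarrow> 1) (at_right 0)"
    by (rule Lim_transform_eventually)
  have "M_fun (\<lambda>t. ereal (Psi_e t)) s = 1"
    by (rule M_fun_eq_1[OF Psi_e_0 strict_mono_on_Psi_e Psi_e_inverse_phi_e s True lim])
       (simp_all add: eventually_at_right_less)
  then show ?thesis
    using True by simp
next
  case False
  have "\<forall>\<^sub>F t in at_top. sqrt s = (1 / phi_e t) / (1 / phi_e (s * t))"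
    unfolding eventually_at_top_linorder
  proof (intro exI[of _ 1] allI impI)
    fix t :: real assume "1 \<le> t"
    moreover have "t \<le> s * t" "exp (-2) \<le> (1::real)"
      using False \<open>1 \<le> t\<close> by simp_all
    ultimately have "exp (-2) \<le> t" "exp (-2) \<le> s * t"
      by linarith+
    then have "phi_e t = exp 1 / 2 * sqrt t" "phi_e (s * t) = exp 1 / 2 * sqrt (s * t)"
      unfolding phi_e_def by auto
    then show "sqrt s = (1 / phi_e t) / (1 / phi_e (s * t))"
      using \<open>1 \<le> t\<close> by (simp only:) (simp add: real_sqrt_mult)
  qed
  then have lim: "((\<lambda>t. (1 / phi_e t) / (1 / phi_e (s * t))) \<longlongrightarrow> sqrt s) at_top"
    by (rule Lim_transform_eventually[OF tendsto_const])
  have "M_fun (\<lambda>t. ereal (Psi_e t)) s = sqrt s"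
    using False
    by (intro M_fun_eq_sqrt[OF Psi_e_0 strict_mono_on_Psi_e Psi_e_div_square_mono Psi_e_inverse_phi_e _ lim])
       (simp_all add: eventually_gt_at_top)
  then show ?thesis
    using False by simp
qed

lemma cosh_minus_one_inverse:
  fixes t :: real
  assumes "0 < t"
  shows "0 < arcosh (1 + 1 / t) \<and> (cosh (arcosh (1 + 1 / t)) - 1) * t = 1"
  using assms by simp

lemma M_fun_cosh_minus_one:
  assumes s: "0 < s"
  shows "M_fun (\<lambda>t. ereal (cosh t - 1)) s = (if s \<le> 1 then 1 else sqrt s)"
proof -
  have arcosh: "arcosh (1 + 1 / t) = ln (1 + 1 / t + sqrt ((1 + 1 / t)\<^sup>2 - 1))" if "0 < t" for t :: real
    using that by (simp add: arcosh_real_def)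
  show ?thesis
  proof (cases "s \<le> 1")
    case True
    have "((\<lambda>t. ln (1 + 1 / t + sqrt ((1 + 1 / t)\<^sup>2 - 1)) /
        ln (1 + 1 / (s * t) + sqrt ((1 + 1 / (s * t))\<^sup>2 - 1))) \<longlongrightarrow> 1) (at_right 0)"
      using s by real_asymp
    then have lim: "((\<lambda>t. arcosh (1 + 1 / t) / arcosh (1 + 1 / (s * t))) \<longlongrightarrow> 1) (at_right 0)"
      by (rule Lim_transform_eventually)
        (use eventually_at_right_less[of "0::real"] in \<open>eventually_elim, use s in \<open>simp add: arcosh\<close>\<close>)
    have "M_fun (\<lambda>t. ereal (cosh t - 1)) s = 1"
      by (rule M_fun_eq_1[where X = "\<lambda>t. arcosh (1 + 1 / t)",
          OF _ strict_mono_on_cosh_minus_one cosh_minus_one_inverse s True lim])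
         (simp_all add: eventually_at_right_less)
    then show ?thesis
      using True by simp
  next
    case False
    \<comment> \<open>the form in which \<open>real_asymp\<close> returns the limit\<close>
    have sqrt_s: "sqrt s = 2 powr (1 / 2) * inverse ((inverse s * 2) powr (1 / 2))"
      using s by (simp add: powr_half_sqrt real_sqrt_mult real_sqrt_inverse)
    have "((\<lambda>t. ln (1 + 1 / t + sqrt ((1 + 1 / t)\<^sup>2 - 1)) /
        ln (1 + 1 / (s * t) + sqrt ((1 + 1 / (s * t))\<^sup>2 - 1))) \<longlongrightarrow> sqrt s) at_top"
      unfolding sqrt_s using s by real_asymp
    then have lim: "((\<lambda>t. arcosh (1 + 1 / t) / arcosh (1 + 1 / (s * t))) \<longlongrightarrow> sqrt s) at_top"
      by (rule Lim_transform_eventually)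
        (use eventually_gt_at_top[of "0::real"] in \<open>eventually_elim, use s in \<open>simp add: arcosh\<close>\<close>)
    have "M_fun (\<lambda>t. ereal (cosh t - 1)) s = sqrt s"
      using False
      by (intro M_fun_eq_sqrt[where X = "\<lambda>t. arcosh (1 + 1 / t)",
          OF _ strict_mono_on_cosh_minus_one cosh_minus_one_div_square_mono cosh_minus_one_inverse _ lim])
         (simp_all add: eventually_gt_at_top)
    then show ?thesis
      using False by simp
  qed
qed

lemma orlicz_space_Psi_e_eq_cosh_minus_one:
  "orlicz_space (\<lambda>t. ereal (Psi_e t)) = orlicz_space (\<lambda>t. ereal (cosh t - 1))"
proof
  show "orlicz_space (\<lambda>t. ereal (Psi_e t)) \<subseteq> orlicz_space (\<lambda>t. ereal (cosh t - 1))"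
    by (rule orlicz_space_subset[of 1]) (simp_all add: cosh_minus_one_le_Psi_e)
  show "orlicz_space (\<lambda>t. ereal (cosh t - 1)) \<subseteq> orlicz_space (\<lambda>t. ereal (Psi_e t))"
    by (rule orlicz_space_subset[of 8]) (simp_all add: Psi_e_le_cosh_minus_one_scaled)
qed

lemma luxemburg_norm_Psi_e_cosh_minus_one:
  assumes f: "f \<in> orlicz_space (\<lambda>t. ereal (Psi_e t))"
  shows "luxemburg_norm (\<lambda>t. ereal (Psi_e t)) f \<le> 8 * luxemburg_norm (\<lambda>t. ereal (cosh t - 1)) f"
    and "luxemburg_norm (\<lambda>t. ereal (cosh t - 1)) f \<le> luxemburg_norm (\<lambda>t. ereal (Psi_e t)) f"
proof -
  obtain k where k: "0 < k" "orlicz_modular (\<lambda>t. ereal (Psi_e t)) (\<lambda>x. f x / k) \<le> 1"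
    using luxemburg_admissible_exists[OF Psi_e_measurable Psi_e_nonneg Psi_e_mult_le f] by blast
  have cosh_le: "\<And>y. 0 \<le> y \<Longrightarrow> cosh y - 1 \<le> Psi_e (1 * y)"
    by (simp add: cosh_minus_one_le_Psi_e)
  have "orlicz_modular (\<lambda>t. ereal (cosh t - 1)) (\<lambda>x. f x / (1 * k)) \<le> 1"
    by (rule luxemburg_admissible_rescale[OF _ cosh_le k]) simp
  then show "luxemburg_norm (\<lambda>t. ereal (Psi_e t)) f \<le> 8 * luxemburg_norm (\<lambda>t. ereal (cosh t - 1)) f"
    using k by (intro luxemburg_norm_le_rescale) (auto simp: Psi_e_le_cosh_minus_one_scaled)
  show "luxemburg_norm (\<lambda>t. ereal (cosh t - 1)) f \<le> luxemburg_norm (\<lambda>t. ereal (Psi_e t)) f"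
    using luxemburg_norm_le_rescale[where b = 1 and Q = "\<lambda>t. cosh t - 1" and P = Psi_e, OF _ cosh_le] k
    by auto
qed

theorem mainTheorem9:
  shows
  \<comment> \<open>(a)\<close>
  "young_function (\<lambda>t. ereal (Psi_e t)) \<and>
   (\<exists>m M. 0 < m \<and> m < M \<and>
      (\<forall>t\<ge>0. m * Psi_e t \<le> cosh t - 1 \<and> cosh t - 1 \<le> M * Psi_e t)) \<and>
   orlicz_space (\<lambda>t. ereal (Psi_e t)) = orlicz_space (\<lambda>t. ereal (cosh t - 1)) \<and>
   (\<exists>c C. 0 < c \<and> 0 < C \<and>
      (\<forall>f\<in>orlicz_space (\<lambda>t. ereal (Psi_e t)).
         c * luxemburg_norm (\<lambda>t. ereal (Psi_e t)) f \<le> luxemburg_norm (\<lambda>t. ereal (cosh t - 1)) f \<and>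
         luxemburg_norm (\<lambda>t. ereal (cosh t - 1)) f \<le> C * luxemburg_norm (\<lambda>t. ereal (Psi_e t)) f)) \<and>
   \<comment> \<open>(b)\<close>
   (\<forall>t>0. \<forall>E. E \<in> sets lebesgue \<longrightarrow> E \<subseteq> {0<..} \<longrightarrow> emeasure lebesgue E = ennreal t \<longrightarrow>
      luxemburg_norm (\<lambda>t. ereal (Psi_e t)) (indicator E) = phi_e t) \<and>
   (\<forall>t>0. fundamental_function (\<lambda>t. ereal (Psi_e t)) t = phi_e t) \<and>
   \<comment> \<open>(c)\<close>
   (\<forall>s>0. M_fun (\<lambda>t. ereal (Psi_e t)) s = (if s \<le> 1 then 1 else sqrt s)) \<and>
   \<comment> \<open>(d)\<close>
   upper_index (\<lambda>t. ereal (Psi_e t)) = 1/2 \<and>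
   upper_index (\<lambda>t. ereal (cosh t - 1)) = 1/2 \<and>
   lower_index (\<lambda>t. ereal (Psi_e t)) = 0 \<and>
   lower_index (\<lambda>t. ereal (cosh t - 1)) = 0"
proof (intro conjI)
  have bounds: "1 / 8 * Psi_e t \<le> cosh t - 1 \<and> cosh t - 1 \<le> 1 * Psi_e t" if "0 \<le> t" for t
    using Psi_e_le_cosh_minus_one[OF that] cosh_minus_one_le_Psi_e[OF that] by simp
  show "\<exists>m M. 0 < m \<and> m < M \<and> (\<forall>t\<ge>0. m * Psi_e t \<le> cosh t - 1 \<and> cosh t - 1 \<le> M * Psi_e t)"
    by (rule exI[of _ "1 / 8"], rule exI[of _ 1]) (use bounds in auto)
  show "\<exists>c C. 0 < c \<and> 0 < C \<and>
      (\<forall>f\<in>orlicz_space (\<lambda>t. ereal (Psi_e t)).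
         c * luxemburg_norm (\<lambda>t. ereal (Psi_e t)) f \<le> luxemburg_norm (\<lambda>t. ereal (cosh t - 1)) f \<and>
         luxemburg_norm (\<lambda>t. ereal (cosh t - 1)) f \<le> C * luxemburg_norm (\<lambda>t. ereal (Psi_e t)) f)"
    by (rule exI[of _ "1 / 8"], rule exI[of _ 1]) (use luxemburg_norm_Psi_e_cosh_minus_one in \<open>auto simp: mult.commute\<close>)
  show "upper_index (\<lambda>t. ereal (Psi_e t)) = 1/2"
    by (rule upper_index_eq) (simp add: M_fun_Psi_e powr_half_sqrt)
  show "upper_index (\<lambda>t. ereal (cosh t - 1)) = 1/2"
    by (rule upper_index_eq) (simp add: M_fun_cosh_minus_one powr_half_sqrt)
  show "lower_index (\<lambda>t. ereal (Psi_e t)) = 0"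
    by (rule lower_index_eq) (simp add: M_fun_Psi_e)
  show "lower_index (\<lambda>t. ereal (cosh t - 1)) = 0"
    by (rule lower_index_eq) (simp add: M_fun_cosh_minus_one)
qed (simp_all add: young_function_Psi_e orlicz_space_Psi_e_eq_cosh_minus_one
       luxemburg_norm_Psi_e_indicator fundamental_function_Psi_e M_fun_Psi_e)

end
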